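(* Let $n\geq1$ and define the linear map $$\alpha:CF(n)\oplus CF(n)\oplus\mathrm{Ker}(\partial_n)\oplus\mathrm{Ker}(\partial_n)\to\mathrm{Im}(\partial_n)\oplus\mathrm{Ker}(\partial_n),$$ $$(u,v,w,t)\mapsto(\partial_n\eta_n u+\partial_n v,\ \partial_n\eta_n u+w+t+\eta_n w).$$ Then $\mathrm{Ker}(\alpha)$ is exactly the set of $(u,v,w,t)$ in the domain of $\alpha$ satisfying $$\partial_nv=w+t+\eta_n w,\qquad \partial_nu=w+\eta_n t+\eta_n w,\qquad \partial_nw=0.$$
   Context: $CF(n)$ is the $\mathbb{Z}_2$-vector space with basis the tuples $(\epsilon_1,\dots,\epsilon_{2n-1})\in\{\pm1\}^{2n-1}$. Linear maps $\eta_n,\tilde\partial_n:CF(n)\to CF(n)$ are given on basis elements by $\eta_n(\epsilon_1,\dots,\epsilon_{2n-1})=(-\epsilon_1,\dots,-\epsilon_{2n-1})$ and $\tilde\partial_n(\epsilon_1,\dots,\epsilon_{2n-1})=\sum_{i=1}^{2n-1}(\epsilon_1,\dots,-\epsilon_i,\dots,\epsilon_{2n-1})$, and $\partial_n=\tilde\partial_n+\eta_n$. *)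

theory Defs
  imports Main "HOL-Library.Z2"
begin

text \<open>Basis tuples (eps_1,...,eps_{2n-1}) in {+1,-1}^{2n-1}, encoded as bool lists of
length 2n-1 (True = +1, False = -1). Negating a sign = logical negation.\<close>
definition basisF :: "nat \<Rightarrow> bool list set" where
  "basisF n = {xs. length xs = 2 * n - 1}"

definition CF :: "nat \<Rightarrow> (bool list \<Rightarrow> bit) set" where
  "CF n = {f. \<forall>x. x \<notin> basisF n \<longrightarrow> f x = 0}"

definition vadd :: "(bool list \<Rightarrow> bit) \<Rightarrow> (bool list \<Rightarrow> bit) \<Rightarrow> (bool list \<Rightarrow> bit)" where
  "vadd f g = (\<lambda>y. f y + g y)"

definition vzero :: "bool list \<Rightarrow> bit" where
  "vzero = (\<lambda>_. 0)"

definition bvec :: "bool list \<Rightarrow> (bool list \<Rightarrow> bit)" where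
  "bvec x = (\<lambda>y. if y = x then 1 else 0)"

definition linext :: "nat \<Rightarrow> (bool list \<Rightarrow> (bool list \<Rightarrow> bit)) \<Rightarrow> (bool list \<Rightarrow> bit) \<Rightarrow> (bool list \<Rightarrow> bit)" where
  "linext n g f = (\<lambda>y. \<Sum>x\<in>basisF n. f x * g x y)"

definition eta :: "nat \<Rightarrow> (bool list \<Rightarrow> bit) \<Rightarrow> (bool list \<Rightarrow> bit)" where
  "eta n = linext n (\<lambda>x. bvec (map Not x))"

definition dtilde :: "nat \<Rightarrow> (bool list \<Rightarrow> bit) \<Rightarrow> (bool list \<Rightarrow> bit)" where
  "dtilde n = linext n (\<lambda>x. (\<lambda>y. \<Sum>i<2 * n - 1. bvec (x[i := \<not> x ! i]) y))"

definition bd :: "nat \<Rightarrow> (bool list \<Rightarrow> bit) \<Rightarrow> (bool list \<Rightarrow> bit)" where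
  "bd n f = vadd (dtilde n f) (eta n f)"

definition KerBd :: "nat \<Rightarrow> (bool list \<Rightarrow> bit) set" where
  "KerBd n = {f \<in> CF n. bd n f = vzero}"

definition ImBd :: "nat \<Rightarrow> (bool list \<Rightarrow> bit) set" where
  "ImBd n = bd n ` CF n"

definition alpha_dom :: "nat \<Rightarrow> ((bool list \<Rightarrow> bit) \<times> (bool list \<Rightarrow> bit) \<times> (bool list \<Rightarrow> bit) \<times> (bool list \<Rightarrow> bit)) set" where
  "alpha_dom n = CF n \<times> CF n \<times> KerBd n \<times> KerBd n"

definition alpha :: "nat \<Rightarrow> (bool list \<Rightarrow> bit) \<times> (bool list \<Rightarrow> bit) \<times> (bool list \<Rightarrow> bit) \<times> (bool list \<Rightarrow> bit)
    \<Rightarrow> (bool list \<Rightarrow> bit) \<times> (bool list \<Rightarrow> bit)" where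
  "alpha n = (\<lambda>(u, v, w, t).
     (vadd (bd n (eta n u)) (bd n v),
      vadd (vadd (vadd (bd n (eta n u)) w) t) (eta n w)))"

definition alpha_ker :: "nat \<Rightarrow> ((bool list \<Rightarrow> bit) \<times> (bool list \<Rightarrow> bit) \<times> (bool list \<Rightarrow> bit) \<times> (bool list \<Rightarrow> bit)) set" where
  "alpha_ker n = {p \<in> alpha_dom n. alpha n p = (vzero, vzero)}"

end

theory Submission
  imports Defs
begin

text \<open>The kernel conditions are the two components of \<open>\<alpha> = 0\<close> rewritten with two facts:
  \<open>\<partial>\<^sub>n\<close> commutes with \<open>\<eta>\<^sub>n\<close>, and \<open>\<eta>\<^sub>n\<close> is a linear involution. Over \<open>\<int>\<^sub>2\<close> the first
  component says \<open>\<partial>v = \<partial>\<eta>u\<close> and the second \<open>\<eta>\<partial>u = w + t + \<eta>w\<close>; applying \<open>\<eta>\<close> to the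
  latter gives \<open>\<partial>u = w + \<eta>t + \<eta>w\<close>, and substituting back gives \<open>\<partial>v = w + t + \<eta>w\<close>.
  Commutation and involutivity are checked pointwise, after evaluating each linear extension at a tuple: \<open>\<eta>f\<close> at \<open>y\<close> is
  \<open>f(-y)\<close>, and \<open>\<partial>f\<close> at \<open>y\<close> is \<open>f(-y)\<close> plus the values of \<open>f\<close> at the \<open>2n - 1\<close> single
  sign flips of \<open>y\<close>.\<close>

lemma finite_basisF: "finite (basisF n)"
  using finite_lists_length_eq[of "UNIV :: bool set" "2 * n - 1"]
  by (simp add: basisF_def)

lemma eta_apply: "eta n f y = (if length y = 2 * n - 1 then f (map Not y) else 0)"
proof -
  have "eta n f y = (\<Sum>x\<in>basisF n. if x = map Not y then f x else 0)"
    unfolding eta_def linext_def bvec_def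
    by (rule sum.cong) (auto simp: map_idI)
  also have "\<dots> = (if map Not y \<in> basisF n then f (map Not y) else 0)"
    using finite_basisF by (simp add: sum.delta)
  finally show ?thesis by (simp add: basisF_def)
qed

lemma list_update_flip_eq_iff:
  assumes "i < length x"
  shows "(y = x[i := \<not> x ! i]) \<longleftrightarrow> (x = y[i := \<not> y ! i])"
  using assms by auto

lemma dtilde_apply:
  "dtilde n f y = (if length y = 2 * n - 1 then (\<Sum>i<2 * n - 1. f (y[i := \<not> y ! i])) else 0)"
proof -
  have flip: "f x * bvec (x[i := \<not> x ! i]) y = (if x = y[i := \<not> y ! i] then f x else 0)"
    if "x \<in> basisF n" "i < 2 * n - 1" for x i
    using that list_update_flip_eq_iff[of i x y] by (simp add: bvec_def basisF_def)
  have "dtilde n f y = (\<Sum>x\<in>basisF n. \<Sum>i<2 * n - 1. if x = y[i := \<not> y ! i] then f x else 0)"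
    unfolding dtilde_def linext_def sum_distrib_left
    by (intro sum.cong refl) (simp only: flip lessThan_iff)
  also have "\<dots> = (\<Sum>i<2 * n - 1. \<Sum>x\<in>basisF n. if x = y[i := \<not> y ! i] then f x else 0)"
    by (rule sum.swap)
  also have "\<dots> = (\<Sum>i<2 * n - 1. if y[i := \<not> y ! i] \<in> basisF n then f (y[i := \<not> y ! i]) else 0)"
    using finite_basisF by (simp only: sum.delta)
  finally show ?thesis by (simp add: basisF_def)
qed

lemma bd_apply:
  "bd n f y = (if length y = 2 * n - 1
     then (\<Sum>i<2 * n - 1. f (y[i := \<not> y ! i])) + f (map Not y) else 0)"
  by (simp add: bd_def vadd_def dtilde_apply eta_apply)

lemma bd_in_CF: "bd n f \<in> CF n"
  by (simp add: CF_def bd_apply basisF_def)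

lemma bd_eta_commute: "bd n (eta n f) = eta n (bd n f)"
proof
  fix y
  show "bd n (eta n f) y = eta n (bd n f) y"
  proof (cases "length y = 2 * n - 1")
    case True
    have "eta n f (y[i := \<not> y ! i]) = f ((map Not y)[i := \<not> map Not y ! i])"
      if "i < 2 * n - 1" for i
      using True that by (simp add: eta_apply map_update)
    then show ?thesis
      using True by (simp add: bd_apply eta_apply comp_def)
  qed (simp add: bd_apply eta_apply)
qed

lemma eta_eta: "f \<in> CF n \<Longrightarrow> eta n (eta n f) = f"
  by (rule ext) (auto simp: eta_apply CF_def basisF_def comp_def)

lemma eta_vadd: "eta n (vadd f g) = vadd (eta n f) (eta n g)"
  by (rule ext) (simp add: eta_apply vadd_def)

interpretation vadd: abel_semigroup vadd
  by unfold_locales (simp_all add: vadd_def fun_eq_iff ac_simps del: add_bit_eq_xor)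

lemma vadd_eq_vzero_iff: "vadd f g = vzero \<longleftrightarrow> f = g"
proof -
  have "(a :: bit) + b = 0 \<longleftrightarrow> a = b" for a b
    by (cases a; cases b) auto
  then show ?thesis
    by (simp add: vadd_def vzero_def fun_eq_iff del: add_bit_eq_xor)
qed

lemma alpha_eq_zero_iff:
  assumes "w \<in> CF n" and "t \<in> CF n"
  shows "alpha n (u, v, w, t) = (vzero, vzero) \<longleftrightarrow>
    bd n v = vadd (vadd w t) (eta n w) \<and> bd n u = vadd (vadd w (eta n t)) (eta n w)"
proof -
  define R where "R = vadd (vadd w t) (eta n w)"
  define S where "S = vadd (vadd w (eta n t)) (eta n w)"
  have "eta n R = S" and "eta n S = R"
    using assms
    by (simp_all add: R_def S_def eta_vadd eta_eta vadd.assoc vadd.commute vadd.left_commute)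
  then have "eta n (bd n u) = R \<longleftrightarrow> bd n u = S"
    using eta_eta[OF bd_in_CF] by metis
  moreover have "alpha n (u, v, w, t) = (vadd (eta n (bd n u)) (bd n v), vadd (eta n (bd n u)) R)"
    by (simp add: alpha_def bd_eta_commute R_def vadd.assoc)
  ultimately show ?thesis
    by (auto simp: vadd_eq_vzero_iff simp flip: R_def S_def)
qed

theorem lemma4p4:
  fixes n :: nat
  assumes "n \<ge> 1"
  shows "alpha_ker n =
    {(u, v, w, t). (u, v, w, t) \<in> alpha_dom n \<and>
       bd n v = vadd (vadd w t) (eta n w) \<and>
       bd n u = vadd (vadd w (eta n t)) (eta n w) \<and>
       bd n w = vzero}"
  using alpha_eq_zero_iff by (auto simp: alpha_ker_def alpha_dom_def KerBd_def)

end
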